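(* Let $k\ge 2$ be an integer and let $\mathcal{M}_k:(1,+\infty)^k\to\mathbb{R}$ be defined by $$\mathcal{M}_k(x_1,\ldots,x_k)=\int_{[0,1]^{k-1}} (x_1-1)^{t_1}(x_2-1)^{t_2}\cdots(x_{k-1}-1)^{t_{k-1}}(x_k-1)^{1-(t_1+\cdots+t_{k-1})}\,dt_1\cdots dt_{k-1}.$$ Then for all $x_1,\ldots,x_k\in(1,+\infty)$ with $x_i\neq x_k$ for $i=1,\ldots,k-1$, $$\mathcal{M}_k(x_1,\ldots,x_k)=\frac{(x_1-x_k)(x_2-x_k)\cdots(x_{k-1}-x_k)}{(x_k-1)^{k-2}\log\left(\frac{x_1-1}{x_k-1}\right)\cdots\log\left(\frac{x_{k-1}-1}{x_k-1}\right)}.$$ *)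

theory Defs
  imports "HOL-Analysis.Analysis"
begin

definition M :: "nat \<Rightarrow> (nat \<Rightarrow> real) \<Rightarrow> real" where
  "M k x = (LINT t : PiE {1..k-1} (\<lambda>_. {0..1::real}) | PiM {1..k-1} (\<lambda>_. lborel).
      (\<Prod>i\<in>{1..k-1}. (x i - 1) powr (t i)) * (x k - 1) powr (1 - (\<Sum>i\<in>{1..k-1}. t i)))"

end

theory Submission
  imports Defs
begin

text \<open>With \<open>c = x_k - 1\<close> and \<open>r_i = (x_i - 1) / c\<close> the integrand is
  \<open>c * r_1^t_1 * ... * r_(k-1)^t_(k-1)\<close>, a product of functions of one variable each.
  By Fubini the integral over the cube is therefore \<open>c\<close> times the product of the
  one-dimensional integrals \<open>(r_i - 1) / ln r_i\<close> of \<open>r_i^s\<close> over \<open>[0,1]\<close>, and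
  \<open>c * (r_i - 1) = x_i - x_k\<close>.\<close>

lemma
  fixes r :: real
  assumes "r > 0" "r \<noteq> 1"
  shows integrable_powr_indicator_unit: "integrable lborel (\<lambda>s. r powr s * indicator {0..1} s)"
    and integral_powr_indicator_unit:
      "integral\<^sup>L lborel (\<lambda>s. r powr s * indicator {0..1} s) = (r - 1) / ln r"
proof -
  have deriv: "DERIV (\<lambda>s. r powr s / ln r) s :> r powr s" for s
    using assms by (auto intro!: derivative_eq_intros)
  have cont: "isCont (\<lambda>s. r powr s) s" for s
    using assms by (auto intro!: continuous_intros)
  show "integrable lborel (\<lambda>s. r powr s * indicator {0..1} s)"
    by (rule borel_integrable_atLeastAtMost) (use cont in auto)
  have "integral\<^sup>L lborel (\<lambda>s. r powr s * indicator {0..1} s) = r powr 1 / ln r - r powr 0 / ln r"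
    by (rule integral_FTC_Icc_real) (use deriv cont in auto)
  also have "\<dots> = (r - 1) / ln r"
    using assms by (simp add: diff_divide_distrib)
  finally show "integral\<^sup>L lborel (\<lambda>s. r powr s * indicator {0..1} s) = (r - 1) / ln r" .
qed

lemma integral_prod_powr_unit_cube:
  fixes r :: "'i \<Rightarrow> real"
  assumes "finite I" and "\<And>i. i \<in> I \<Longrightarrow> r i > 0" and "\<And>i. i \<in> I \<Longrightarrow> r i \<noteq> 1"
  shows "integral\<^sup>L (PiM I (\<lambda>_. lborel))
           (\<lambda>t. \<Prod>i\<in>I. r i powr t i * indicator {0..1} (t i)) = (\<Prod>i\<in>I. (r i - 1) / ln (r i))"
proof -
  interpret product_sigma_finite "\<lambda>_::'i. lborel :: real measure"
    by unfold_locales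
  have "integral\<^sup>L (PiM I (\<lambda>_. lborel))
      (\<lambda>t. \<Prod>i\<in>I. r i powr t i * indicator {0..1} (t i))
      = (\<Prod>i\<in>I. integral\<^sup>L lborel (\<lambda>s. r i powr s * indicator {0..1} s))"
    using assms by (intro product_integral_prod integrable_powr_indicator_unit) auto
  then show ?thesis
    using assms by (simp add: integral_powr_indicator_unit)
qed

lemma indicator_cube_times_powr_eq:
  fixes a :: "'i \<Rightarrow> real" and c :: real
  assumes "finite I" and "c > 0" and "t \<in> extensional I"
  shows "indicator (PiE I (\<lambda>_. {0..1})) t * ((\<Prod>i\<in>I. a i powr t i) * c powr (1 - sum t I))
           = c * (\<Prod>i\<in>I. (a i / c) powr t i * indicator {0..1} (t i))"
proof (cases "\<forall>i\<in>I. t i \<in> {0..1}")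
  case True
  then have "t \<in> PiE I (\<lambda>_. {0..1})"
    using assms(3) by (auto simp: PiE_def)
  moreover have "(\<Prod>i\<in>I. (a i / c) powr t i * indicator {0..1} (t i))
      = (\<Prod>i\<in>I. a i powr t i) / c powr (sum t I)"
    using True \<open>c > 0\<close> by (simp add: powr_divide prod_dividef powr_sum)
  ultimately show ?thesis
    using \<open>c > 0\<close> by (simp add: powr_diff)
next
  case False
  then obtain j where "j \<in> I" "t j \<notin> {0..1}"
    by auto
  then have "t \<notin> PiE I (\<lambda>_. {0..1})"
    and "(\<Prod>i\<in>I. (a i / c) powr t i * indicator {0..1} (t i)) = 0"
    using \<open>finite I\<close> by (auto intro!: prod_zero bexI[of _ j])
  then show ?thesis
    by simp
qed

lemma mult_prod_ratio_diff_div_ln: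
  fixes a :: "'i \<Rightarrow> real" and c :: real
  assumes "finite I" and "I \<noteq> {}" and "c > 0"
  shows "c * (\<Prod>i\<in>I. (a i / c - 1) / ln (a i / c))
           = (\<Prod>i\<in>I. a i - c) / (c ^ (card I - 1) * (\<Prod>i\<in>I. ln (a i / c)))"
proof -
  have "(\<Prod>i\<in>I. (a i / c - 1) / ln (a i / c)) = (\<Prod>i\<in>I. (a i - c) / (c * ln (a i / c)))"
    using \<open>c > 0\<close> by (intro prod.cong) (auto simp: field_simps)
  also have "\<dots> = (\<Prod>i\<in>I. a i - c) / (c ^ card I * (\<Prod>i\<in>I. ln (a i / c)))"
    by (simp add: prod_dividef prod.distrib)
  finally have "c * (\<Prod>i\<in>I. (a i / c - 1) / ln (a i / c))
      = c * ((\<Prod>i\<in>I. a i - c) / (c ^ card I * (\<Prod>i\<in>I. ln (a i / c))))"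
    by simp
  also have "c ^ card I = c * c ^ (card I - 1)"
    using assms by (simp add: power_eq_if)
  finally show ?thesis
    using \<open>c > 0\<close> by (simp add: mult.assoc)
qed

lemma set_integral_cube_prod_powr:
  fixes a :: "'i \<Rightarrow> real" and c :: real
  assumes "finite I" and "I \<noteq> {}" and "c > 0"
    and "\<And>i. i \<in> I \<Longrightarrow> a i > 0" and "\<And>i. i \<in> I \<Longrightarrow> a i \<noteq> c"
  shows "(LINT t : PiE I (\<lambda>_. {0..1}) | PiM I (\<lambda>_. lborel).
            (\<Prod>i\<in>I. a i powr t i) * c powr (1 - sum t I))
         = (\<Prod>i\<in>I. a i - c) / (c ^ (card I - 1) * (\<Prod>i\<in>I. ln (a i / c)))"
proof -
  have "(LINT t : PiE I (\<lambda>_. {0..1}) | PiM I (\<lambda>_. lborel).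
          (\<Prod>i\<in>I. a i powr t i) * c powr (1 - sum t I))
      = integral\<^sup>L (PiM I (\<lambda>_. lborel))
          (\<lambda>t. c * (\<Prod>i\<in>I. (a i / c) powr t i * indicator {0..1} (t i)))"
    unfolding set_lebesgue_integral_def
    using assms(1,3)
    by (intro Bochner_Integration.integral_cong)
      (auto simp: space_PiM PiE_iff indicator_cube_times_powr_eq)
  also have "\<dots> = c * (\<Prod>i\<in>I. (a i / c - 1) / ln (a i / c))"
    using assms
    by (simp only: integral_mult_right_zero, subst integral_prod_powr_unit_cube)
      (auto simp: field_simps)
  also have "\<dots> = (\<Prod>i\<in>I. a i - c) / (c ^ (card I - 1) * (\<Prod>i\<in>I. ln (a i / c)))"
    using assms(1-3) by (rule mult_prod_ratio_diff_div_ln)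
  finally show ?thesis .
qed

theorem mainTheorem7:
  fixes k :: nat and x :: "nat \<Rightarrow> real"
  assumes "k \<ge> 2"
    and "\<And>i. i \<in> {1..k} \<Longrightarrow> x i > 1"
    and "\<And>i. i \<in> {1..k-1} \<Longrightarrow> x i \<noteq> x k"
  shows "M k x = (\<Prod>i\<in>{1..k-1}. x i - x k) /
           ((x k - 1) ^ (k - 2) * (\<Prod>i\<in>{1..k-1}. ln ((x i - 1) / (x k - 1))))"
proof -
  have "M k x = (\<Prod>i\<in>{1..k-1}. (x i - 1) - (x k - 1)) /
      ((x k - 1) ^ (card {1..k-1} - 1) * (\<Prod>i\<in>{1..k-1}. ln ((x i - 1) / (x k - 1))))"
    unfolding M_def
    using assms by (intro set_integral_cube_prod_powr) auto
  moreover have "card {1..k-1} - 1 = k - 2"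
    by simp
  ultimately show ?thesis
    by simp
qed

end
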